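(* Let $\mathfrak g$ be a nilpotent Lie algebra of nilindex $4$ (i.e. $\mathfrak g^4=0$) over a field of characteristic zero, and let $R:\mathfrak g\to\mathfrak g$ be a Rota–Baxter operator of weight 1 with $R(\mathfrak g^i)\subset\mathfrak g^i$ for $i=2,3$. Then the map $$\mathfrak R(x)=R(x)-\tfrac12R([R(x),x])+\tfrac1{12}R\big([[R(x),x],x]+[R(x),[R(x),x]]\big)+\tfrac14R\big([R([R(x),x]),x]\big),\qquad x\in\mathfrak g,$$ is a Rota–Baxter operator on the group $(\mathfrak g,* )$.
   Context: $\mathfrak g^1=\mathfrak g$, $\mathfrak g^n=[\mathfrak g,\mathfrak g^{n-1}]$. Rota–Baxter operator of weight 1 on a Lie algebra: linear $R$ with $[R(x),R(y)]=R([R(x),y]+[x,R(y)]+[x,y])$. The group $(\mathfrak g,* )$ is $\mathfrak g$ with the Baker–Campbell–Hausdorff product $x*y=\log(\exp(x)\exp(y))$ (computed in the completion of $U(\mathfrak g)$ with respect to the filtration induced by $\mathcal F_n\mathfrak g=\mathfrak g^n$; since $\mathfrak g$ is nilpotent this is a finite Lie polynomial in $x,y$). A Rota–Baxter operator on a group $G$ is a map $\mathfrak R:G\to G$ with $\mathfrak R(g)\mathfrak R(h)=\mathfrak R(g\mathfrak R(g)h\mathfrak R(g)^{-1})$ for all $g,h$. *)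

theory Defs
  imports Complex_Main
begin

definition lie_algebra :: "('a::field \<Rightarrow> 'v::ab_group_add \<Rightarrow> 'v) \<Rightarrow> ('v \<Rightarrow> 'v \<Rightarrow> 'v) \<Rightarrow> bool" where
  "lie_algebra scale br \<longleftrightarrow>
     Vector_Spaces.vector_space scale \<and>
     (\<forall>y. Vector_Spaces.linear scale scale (\<lambda>x. br x y)) \<and>
     (\<forall>x. Vector_Spaces.linear scale scale (br x)) \<and>
     (\<forall>x. br x x = 0) \<and>
     (\<forall>x y z. br x (br y z) + br y (br z x) + br z (br x y) = 0)"

text \<open>Lower central series: g^1 = g, g^(n+1) = [g, g^n] (linear span of brackets).
  Index 0 is also mapped to the whole algebra (unused).\<close>
fun lower_central :: "('a::field \<Rightarrow> 'v::ab_group_add \<Rightarrow> 'v) \<Rightarrow> ('v \<Rightarrow> 'v \<Rightarrow> 'v) \<Rightarrow> nat \<Rightarrow> 'v set" where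
  "lower_central scale br 0 = UNIV"
| "lower_central scale br (Suc 0) = UNIV"
| "lower_central scale br (Suc (Suc n)) =
     module.span scale {br x y | x y. y \<in> lower_central scale br (Suc n)}"

definition rota_baxter_lie_w1 :: "('a::field \<Rightarrow> 'v::ab_group_add \<Rightarrow> 'v) \<Rightarrow> ('v \<Rightarrow> 'v \<Rightarrow> 'v) \<Rightarrow> ('v \<Rightarrow> 'v) \<Rightarrow> bool" where
  "rota_baxter_lie_w1 scale br R \<longleftrightarrow>
     Vector_Spaces.linear scale scale R \<and>
     (\<forall>x y. br (R x) (R y) = R (br (R x) y + br x (R y) + br x y))"

text \<open>BCH product x*y = log(exp x exp y), truncated after degree 3; this is the exact
  BCH product on a Lie algebra with g^4 = 0 (all terms of degree \<ge> 4 lie in g^4).\<close>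
definition bch3 :: "('a::field \<Rightarrow> 'v::ab_group_add \<Rightarrow> 'v) \<Rightarrow> ('v \<Rightarrow> 'v \<Rightarrow> 'v) \<Rightarrow> 'v \<Rightarrow> 'v \<Rightarrow> 'v" where
  "bch3 scale br x y = x + y + scale (1/2) (br x y)
     + scale (1/12) (br x (br x y) + br y (br y x))"

definition rota_baxter_group :: "('v \<Rightarrow> 'v \<Rightarrow> 'v) \<Rightarrow> ('v \<Rightarrow> 'v) \<Rightarrow> ('v \<Rightarrow> 'v) \<Rightarrow> bool" where
  "rota_baxter_group mul ginv RR \<longleftrightarrow>
     (\<forall>g h. mul (RR g) (RR h) = RR (mul (mul (mul g (RR g)) h) (ginv (RR g))))"

end

theory Submission imports Defs begin

text \<open>
  With the derived bracket [x,y]_R = [Rx,y] + [x,Ry] + [x,y], the Rota--Baxter identity says that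
  R and id + R are Lie homomorphisms from (g, [-,-]_R) to g; being linear, they are then
  homomorphisms for the BCH products. Hence, if a \<mapsto> (a + Ra) * (Ra)\<inverse> is a bijection with
  inverse T, the map x \<mapsto> R (T x) is a Rota--Baxter operator on (g, *) by a purely group-theoretic
  computation: for x = (a + Ra)(Ra)\<inverse> and y = (b + Rb)(Rb)\<inverse> one gets
  x (Ra) y (Ra)\<inverse> = (a + Ra)(b + Rb)(Ra Rb)\<inverse>, the factorization of a *_R b. When g^4 = 0 and
  R preserves g^2 and g^3, the inverse T is an explicit cubic Lie polynomial, and R \<circ> T is the
  map of the statement.
\<close>

lemma rota_baxter_group_of_factorization:
  fixes mul :: "'g \<Rightarrow> 'g \<Rightarrow> 'g" and mulA :: "'a \<Rightarrow> 'a \<Rightarrow> 'a"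
  assumes assoc: "\<And>x y z. mul (mul x y) z = mul x (mul y z)"
    and right_unit: "\<And>x. mul x e = x"
    and left_inverse: "\<And>x. mul (ginv x) x = e"
    and inverse_mul: "\<And>x y. ginv (mul x y) = mul (ginv y) (ginv x)"
    and R_hom: "\<And>a b. R (mulA a b) = mul (R a) (R b)"
    and P_hom: "\<And>a b. P (mulA a b) = mul (P a) (P b)"
    and F_T: "\<And>x. mul (P (T x)) (ginv (R (T x))) = x"
    and T_F: "\<And>a. T (mul (P a) (ginv (R a))) = a"
  shows "rota_baxter_group mul ginv (\<lambda>x. R (T x))"
  unfolding rota_baxter_group_def
proof (intro allI)
  fix g h
  define F where "F a = mul (P a) (ginv (R a))" for a
  define a b where "a = T g" and "b = T h"
  have g: "g = F a" and h: "h = F b"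
    unfolding a_def b_def F_def F_T by simp_all
  have "mul g (R a) = P a"
    unfolding g F_def assoc left_inverse right_unit ..
  then have "mul (mul (mul g (R a)) h) (ginv (R a)) = mul (mul (P a) h) (ginv (R a))"
    by simp
  also have "\<dots> = mul (mul (P a) (P b)) (mul (ginv (R b)) (ginv (R a)))"
    unfolding h F_def assoc ..
  also have "\<dots> = F (mulA a b)"
    unfolding F_def R_hom P_hom inverse_mul ..
  finally have "mul (mul (mul g (R a)) h) (ginv (R a)) = F (mulA a b)" .
  then have "R (T (mul (mul (mul g (R a)) h) (ginv (R a)))) = R (mulA a b)"
    by (simp only: F_def T_F)
  then show "mul (R (T g)) (R (T h)) = R (T (mul (mul (mul g (R (T g))) h) (ginv (R (T g)))))"
    unfolding a_def b_def R_hom by simp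
qed

lemma bch3_hom:
  assumes "Vector_Spaces.linear scale scale f"
    and "\<And>x y. f (br x y) = br' (f x) (f y)"
  shows "f (bch3 scale br x y) = bch3 scale br' (f x) (f y)"
  using assms unfolding bch3_def Vector_Spaces.linear_iff by simp

locale lie_alg =
  fixes scale :: "'a::field_char_0 \<Rightarrow> 'v::ab_group_add \<Rightarrow> 'v"
    and br :: "'v \<Rightarrow> 'v \<Rightarrow> 'v"
  assumes lie: "lie_algebra scale br"
begin

lemma lie_vector_space: "vector_space scale"
  using lie unfolding lie_algebra_def by blast

sublocale vector_space scale
  by (rule lie_vector_space)

lemma br_linear_left: "Vector_Spaces.linear scale scale (\<lambda>x. br x y)"
  and br_linear_right: "Vector_Spaces.linear scale scale (br x)"
  and br_self: "br x x = 0"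
  and jacobi: "br x (br y z) + br y (br z x) + br z (br x y) = 0"
  using lie unfolding lie_algebra_def by blast+

lemma br_add_left: "br (a + b) c = br a c + br b c"
  and br_scale_left: "br (scale k a) c = scale k (br a c)"
  using br_linear_left[of c] unfolding Vector_Spaces.linear_iff by blast+

lemma br_add_right: "br c (a + b) = br c a + br c b"
  and br_scale_right: "br c (scale k a) = scale k (br c a)"
  using br_linear_right[of c] unfolding Vector_Spaces.linear_iff by blast+

lemma br_zero_left: "br 0 c = 0"
  and br_zero_right: "br c 0 = 0"
  and br_minus_left: "br (- a) c = - br a c"
  and br_minus_right: "br c (- a) = - br c a"
  using br_scale_left[of 0 0 c] br_scale_right[of c 0 0]
    br_scale_left[of "-1" a c] br_scale_right[of c "-1" a] by simp_all

lemma br_diff_left: "br (a - b) c = br a c - br b c"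
  and br_diff_right: "br c (a - b) = br c a - br c b"
  by (simp_all only: diff_conv_add_uminus br_add_left br_add_right br_minus_left br_minus_right)

lemma br_anticomm: "br a b = - br b a"
proof -
  have "0 = br (a + b) (a + b)" by (rule br_self[symmetric])
  also have "\<dots> = br a b + br b a + (br a a + br b b)"
    by (simp add: br_add_left br_add_right algebra_simps)
  also have "\<dots> = br a b + br b a" by (simp add: br_self)
  finally have "br a b + br b a = 0" by simp
  then show ?thesis by (simp add: eq_neg_iff_add_eq_0)
qed

lemma jacobi_rotated: "br z (br x y) = br y (br x z) - br x (br y z)"
  using jacobi[of x y z] br_anticomm[of z x] br_minus_right[of y "br x z"]
  by (simp add: algebra_simps)

lemma scale_numeral_Bit0: "scale (numeral (Num.Bit0 n)) a = scale (numeral n) a + scale (numeral n) a"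
  and scale_numeral_Bit1: "scale (numeral (Num.Bit1 n)) a = scale (numeral n) a + scale (numeral n) a + a"
  by (simp_all only: numeral_Bit0 numeral_Bit1 scale_left_distrib scale_one)

text \<open>
  Identities between Lie polynomials are proved by clearing denominators with
  scale_left_imp_eq, expanding bilinearly and splitting numerals into sums, so that
  cancellation in ab_group_add finishes; each proof adds the antisymmetry instances that bring
  the surviving brackets to a common orientation.
\<close>

lemmas lie_normalize =
  br_add_left br_add_right br_scale_left br_scale_right br_minus_left br_minus_right
  br_diff_left br_diff_right br_zero_left br_zero_right br_self
  scale_right_distrib scale_right_diff_distrib scale_numeral_Bit0 scale_numeral_Bit1

abbreviation bch where "bch \<equiv> bch3 scale br"

lemma bch_zero_right: "bch u 0 = u"
  and bch_minus_left: "bch (- u) u = 0"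
  by (simp_all add: bch3_def lie_normalize)

lemma minus_bch: "- bch u v = bch (- v) (- u)"
  by (rule scale_left_imp_eq[of 12]) (simp_all add: bch3_def lie_normalize br_anticomm[of v u])

abbreviation lcs where "lcs n \<equiv> lower_central scale br n"

lemma br_in_lcs: "b \<in> lcs n \<Longrightarrow> br a b \<in> lcs (Suc n)"
  by (cases n) (auto intro: span_base)

lemma lcs_Suc_subset: "lcs (Suc n) \<subseteq> lcs n"
proof (induction n)
  case (Suc n)
  then show ?case by (cases n) (auto intro!: span_mono)
qed simp

lemma subspace_lcs: "subspace (lcs n)"
  by (cases "(scale, br, n)" rule: lower_central.cases) (auto simp: subspace_UNIV subspace_span)

lemma br_in_lcs_left: "b \<in> lcs n \<Longrightarrow> br b a \<in> lcs (Suc n)"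
  using br_in_lcs[of b n a] subspace_neg[OF subspace_lcs]
  by (subst br_anticomm) blast

lemma br_in_lcs2 [simp]: "br a b \<in> lcs 2"
  using br_in_lcs[of b 1 a] by (simp add: numeral_2_eq_2)

lemma br_in_lcs3_right: "b \<in> lcs 2 \<Longrightarrow> br a b \<in> lcs 3"
  and br_in_lcs3_left: "b \<in> lcs 2 \<Longrightarrow> br b a \<in> lcs 3"
  using br_in_lcs[of b 2 a] br_in_lcs_left[of b 2 a]
  by (simp_all add: numeral_3_eq_3 numeral_2_eq_2)

lemma lcs3_in_lcs2: "b \<in> lcs 3 \<Longrightarrow> b \<in> lcs 2"
  using lcs_Suc_subset[of 2] by (auto simp: numeral_3_eq_3 numeral_2_eq_2)

end

locale lie_alg_nil4 = lie_alg +
  assumes nil4: "lcs 4 = {0}"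
begin

lemma br_lcs3_right: "c \<in> lcs 3 \<Longrightarrow> br a c = 0"
  using br_in_lcs[of c 3 a] nil4 by (simp add: numeral_eq_Suc)

lemma br_lcs3_left: "c \<in> lcs 3 \<Longrightarrow> br c a = 0"
  using br_lcs3_right br_anticomm by (metis neg_equal_0_iff_equal)

lemma br_lcs2_lcs2:
  assumes "a \<in> lcs 2" "b \<in> lcs 2"
  shows "br a b = 0"
proof -
  have "a \<in> span {br x y | x y. True}"
    using assms(1) by (simp add: numeral_eq_Suc)
  then show ?thesis
  proof (induction rule: span_induct_alt)
    case base
    then show ?case by (simp add: br_zero_left)
  next
    case (step c x y)
    then obtain p q where x: "x = br p q" by auto
    have "br p (br q b) = 0" and "br q (br b p) = 0"
      using assms(2) by (simp_all add: br_lcs3_right br_in_lcs3_left br_in_lcs3_right)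
    then have "br (br p q) b = 0"
      using jacobi[of p q b] br_anticomm[of "br p q" b] by simp
    then show ?case using step x by (simp add: br_add_left br_scale_left)
  qed
qed

lemmas lcs_vanishing =
  br_lcs3_left br_lcs3_right br_lcs2_lcs2 br_in_lcs3_left br_in_lcs3_right lcs3_in_lcs2

lemma bch_assoc: "bch (bch x y) z = bch x (bch y z)"
  by (rule scale_left_imp_eq[of 12])
    (simp_all add: bch3_def lie_normalize lcs_vanishing jacobi_rotated[of z x y]
      br_anticomm[of y x] br_anticomm[of z x] br_anticomm[of z y] br_anticomm[of "br a b" x for a b]
      br_anticomm[of "br a b" y for a b] br_anticomm[of "br a b" z for a b])

end

locale lie_rota_baxter = lie_alg +
  fixes R
  assumes rota_baxter: "rota_baxter_lie_w1 scale br R"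
begin

lemma R_linear: "Vector_Spaces.linear scale scale R"
  using rota_baxter unfolding rota_baxter_lie_w1_def by blast

lemma R_add: "R (a + b) = R a + R b"
  and R_scale: "R (scale k a) = scale k (R a)"
  using R_linear unfolding Vector_Spaces.linear_iff by blast+

lemma R_minus: "R (- a) = - R a"
  and R_diff: "R (a - b) = R a - R b"
  using R_scale[of "-1" a] R_add[of a "- b"] R_scale[of "-1" b] by simp_all

definition br_R where
  "br_R x y = br (R x) y + br x (R y) + br x y"

definition id_plus_R where
  "id_plus_R x = x + R x"

lemma R_br_R: "R (br_R x y) = br (R x) (R y)"
  using rota_baxter unfolding rota_baxter_lie_w1_def br_R_def by simp

lemma id_plus_R_br_R: "id_plus_R (br_R x y) = br (id_plus_R x) (id_plus_R y)"
  by (simp add: id_plus_R_def R_br_R) (simp add: br_R_def br_add_left br_add_right add_ac)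

lemma id_plus_R_linear: "Vector_Spaces.linear scale scale id_plus_R"
  unfolding Vector_Spaces.linear_iff id_plus_R_def
  by (simp add: lie_vector_space R_add R_scale scale_right_distrib add_ac)

lemma R_bch3: "R (bch3 scale br_R x y) = bch3 scale br (R x) (R y)"
  using R_linear R_br_R by (rule bch3_hom[where f = R and br = br_R and br' = br])

lemma id_plus_R_bch3: "id_plus_R (bch3 scale br_R x y) = bch3 scale br (id_plus_R x) (id_plus_R y)"
  using id_plus_R_linear id_plus_R_br_R by (rule bch3_hom[where f = id_plus_R and br = br_R and br' = br])

definition PR_quotient where
  "PR_quotient a = bch3 scale br (id_plus_R a) (- R a)"

lemma PR_quotient_eq:
  "PR_quotient a = a + scale (1/2) (br (R a) a)
     + scale (1/12) (br a (br (R a) a) + scale 2 (br (R a) (br (R a) a)))"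
  by (rule scale_left_imp_eq[of 12])
    (simp_all add: PR_quotient_def id_plus_R_def bch3_def lie_normalize br_anticomm[of a "R a"])

end

locale filtered_rota_baxter = lie_alg_nil4 + lie_rota_baxter +
  assumes R_lcs2: "R ` lcs 2 \<subseteq> lcs 2"
    and R_lcs3: "R ` lcs 3 \<subseteq> lcs 3"
begin

lemma R_in_lcs2: "a \<in> lcs 2 \<Longrightarrow> R a \<in> lcs 2"
  and R_in_lcs3: "a \<in> lcs 3 \<Longrightarrow> R a \<in> lcs 3"
  using R_lcs2 R_lcs3 by blast+

text \<open>Solving PR_quotient a = x for a modulo g^4, starting from a = x - 1/2 [Rx, x].\<close>

definition PR_quotient_inv where
  "PR_quotient_inv x = x - scale (1/2) (br (R x) x)
     + scale (1/12) (br (br (R x) x) x + br (R x) (br (R x) x))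
     + scale (1/4) (br (R (br (R x) x)) x)"

lemma R_PR_quotient_inv:
  "R (PR_quotient_inv x) = R x - scale (1/2) (R (br (R x) x))
     + scale (1/12) (R (br (br (R x) x) x + br (R x) (br (R x) x)))
     + scale (1/4) (R (br (R (br (R x) x)) x))"
  by (simp add: PR_quotient_inv_def R_add R_diff R_scale)

lemmas R_normalize = R_add R_diff R_scale R_minus R_in_lcs2 R_in_lcs3 lcs_vanishing
  br_anticomm[of v "R v" for v] br_anticomm[of "br (R v) v" v for v]
  br_anticomm[of "br (R v) v" "R v" for v] br_anticomm[of v "R (br (R v) v)" for v]
  br_anticomm[of "R (br (R v) v)" "R v" for v]

lemma PR_quotient_PR_quotient_inv: "PR_quotient (PR_quotient_inv x) = x"
  by (rule scale_left_imp_eq[of 12])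
    (simp_all add: PR_quotient_eq PR_quotient_inv_def lie_normalize R_normalize)

lemma PR_quotient_inv_PR_quotient: "PR_quotient_inv (PR_quotient a) = a"
  by (rule scale_left_imp_eq[of 12])
    (simp_all add: PR_quotient_eq PR_quotient_inv_def lie_normalize R_normalize)

end

theorem corollary4p24:
  fixes scale :: "'a::field_char_0 \<Rightarrow> 'v::ab_group_add \<Rightarrow> 'v"
    and br :: "'v \<Rightarrow> 'v \<Rightarrow> 'v"
    and R :: "'v \<Rightarrow> 'v"
  assumes "lie_algebra scale br"
    and "lower_central scale br 4 = {0}"
    and "rota_baxter_lie_w1 scale br R"
    and "R ` lower_central scale br 2 \<subseteq> lower_central scale br 2"
    and "R ` lower_central scale br 3 \<subseteq> lower_central scale br 3"
  shows "rota_baxter_group (bch3 scale br) uminus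
           (\<lambda>x. R x - scale (1/2) (R (br (R x) x))
                + scale (1/12) (R (br (br (R x) x) x + br (R x) (br (R x) x)))
                + scale (1/4) (R (br (R (br (R x) x)) x)))"
proof -
  interpret filtered_rota_baxter scale br R
    using assms by unfold_locales
  have "rota_baxter_group bch uminus (\<lambda>x. R (PR_quotient_inv x))"
    using bch_assoc bch_zero_right bch_minus_left minus_bch R_bch3 id_plus_R_bch3
      PR_quotient_PR_quotient_inv[unfolded PR_quotient_def]
      PR_quotient_inv_PR_quotient[unfolded PR_quotient_def]
    by (rule rota_baxter_group_of_factorization)
  then show ?thesis
    unfolding R_PR_quotient_inv .
qed

end
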